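(* Let $n\ge 1$, $1<p<\infty$, and let $f\in L^p(\mathbb{R}^n)$ be radially symmetric. Then there is a constant $C$ (independent of $f$, $R$ and $x$) such that for every $R>0$ and every $x\neq 0$, $$ |(f*\chi_{B(0,R)})(x)| \le C\, R^{\,n-1/p}\, |x|^{-(n-1)/p}\, \| f \|_{L^p(\mathbb{R}^n)}, $$ where $\chi_{B(0,R)}$ is the indicator function of the ball $B(0,R)=\{y\in\mathbb{R}^n:|y|<R\}$.
   Context: A function $f$ on $\mathbb{R}^n$ is radially symmetric if $f(x)=f_0(|x|)$ for some function $f_0$ on $[0,\infty)$. *)

theory Defs
  imports "HOL-Analysis.Analysis"
begin

definition radially_symmetric :: "('a::real_normed_vector \<Rightarrow> 'b) \<Rightarrow> bool" where
  "radially_symmetric f \<longleftrightarrow> (\<exists>f0 :: real \<Rightarrow> 'b. \<forall>x. f x = f0 (norm x))"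

definition in_Lp :: "real \<Rightarrow> ('a::euclidean_space \<Rightarrow> real) \<Rightarrow> bool" where
  "in_Lp p f \<longleftrightarrow> f \<in> borel_measurable lebesgue \<and> integrable lebesgue (\<lambda>x. \<bar>f x\<bar> powr p)"

definition Lp_norm :: "real \<Rightarrow> ('a::euclidean_space \<Rightarrow> real) \<Rightarrow> real" where
  "Lp_norm p f = (LINT x|lebesgue. \<bar>f x\<bar> powr p) powr (1 / p)"

definition conv :: "('a::euclidean_space \<Rightarrow> real) \<Rightarrow> ('a \<Rightarrow> real) \<Rightarrow> 'a \<Rightarrow> real" where
  "conv f g x = (LINT y|lebesgue. f y * g (x - y))"

end

theory Submission
  imports Defs
begin

text \<open>
  For radial f, a rotation carrying x to s shows that |f|^p has the same integral over the
  ball B(x,R) as over B(s,R) whenever |s| = |x|. A maximal 2R-separated set S on the sphere of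
  radius |x| gives pairwise disjoint balls B(s,R), and by maximality the balls B(s,3R) cover the
  shell between the radii |x| and |x| + R; comparing volumes, |x|^(n-1) \<le> 3^n R^(n-1) card S.
  Hence the integral of |f|^p over B(x,R) is at most 3^n (R/|x|)^(n-1) times its integral over
  the whole space, and Hoelder's inequality on B(x,R), whose volume is a multiple of R^n, bounds
  |(f * \<chi>_B(0,R))(x)| \<le> \<integral>_B(x,R) |f| as claimed.
\<close>

section \<open>Rotations of a Euclidean space\<close>

text \<open>
  The library's results on orthogonal transformations and Lebesgue measure are stated for
  \<open>real^'n\<close> with a well-ordered index type; coordinates indexed by the basis transfer them to
  an arbitrary Euclidean space.
\<close>

typedef (overloaded) ('a::euclidean_space) basis_index = "Basis :: 'a set"
  using nonempty_Basis by blast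

instance basis_index :: (euclidean_space) finite
proof
  show "finite (UNIV :: 'a basis_index set)"
    by (metis type_definition.Abs_image type_definition_basis_index finite_Basis finite_imageI)
qed

instantiation basis_index :: (euclidean_space) linorder
begin
definition less_eq_basis_index :: "'a basis_index \<Rightarrow> 'a basis_index \<Rightarrow> bool"
  where "less_eq_basis_index i j \<longleftrightarrow> to_nat i \<le> to_nat j"
definition less_basis_index :: "'a basis_index \<Rightarrow> 'a basis_index \<Rightarrow> bool"
  where "less_basis_index i j \<longleftrightarrow> to_nat i < to_nat j"
instance
  by standard (use inj_to_nat in \<open>auto simp: less_eq_basis_index_def less_basis_index_def dest: injD\<close>)
end

instance basis_index :: (euclidean_space) wellorder
proof
  fix P :: "'a basis_index \<Rightarrow> bool" and i :: "'a basis_index"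
  assume step: "\<And>i. (\<And>j. j < i \<Longrightarrow> P j) \<Longrightarrow> P i"
  show "P i"
    by (induct i rule: measure_induct_rule[of to_nat]) (rule step, auto simp: less_basis_index_def)
qed

definition to_cart :: "'a::euclidean_space \<Rightarrow> real^'a basis_index"
  where "to_cart x = (\<chi> i. x \<bullet> Rep_basis_index i)"

definition of_cart :: "real^'a basis_index \<Rightarrow> 'a::euclidean_space"
  where "of_cart v = (\<Sum>i\<in>UNIV. (v $ i) *\<^sub>R Rep_basis_index i)"

lemma range_Rep_basis_index: "range Rep_basis_index = Basis"
  by (rule type_definition.Rep_range[OF type_definition_basis_index])

lemma bij_betw_Rep_basis_index: "bij_betw Rep_basis_index UNIV Basis"
  by (simp add: bij_betw_def range_Rep_basis_index inj_def Rep_basis_index_inject)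

lemma sum_basis_index: "(\<Sum>i\<in>UNIV. h (Rep_basis_index i)) = (\<Sum>b\<in>Basis. h b)"
  using bij_betw_Rep_basis_index by (rule sum.reindex_bij_betw)

lemma prod_basis_index: "(\<Prod>i\<in>UNIV. h (Rep_basis_index i)) = (\<Prod>b\<in>Basis. h b)"
  using bij_betw_Rep_basis_index by (rule prod.reindex_bij_betw)

lemma of_cart_to_cart [simp]: "of_cart (to_cart x) = x"
  using sum_basis_index[of "\<lambda>b. (x \<bullet> b) *\<^sub>R b"]
  by (simp add: of_cart_def to_cart_def euclidean_representation)

lemma inner_of_cart_Rep_basis_index: "of_cart v \<bullet> Rep_basis_index j = v $ j"
proof -
  have "of_cart v \<bullet> Rep_basis_index j = (\<Sum>i\<in>UNIV. v $ i * (Rep_basis_index i \<bullet> Rep_basis_index j))"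
    by (simp add: of_cart_def inner_sum_left)
  also have "\<dots> = (\<Sum>i\<in>UNIV. if i = j then v $ j else 0)"
    by (intro sum.cong refl) (auto simp: inner_Basis Rep_basis_index Rep_basis_index_inject)
  finally show ?thesis by simp
qed

lemma to_cart_of_cart [simp]: "to_cart (of_cart v) = v"
  by (simp add: to_cart_def inner_of_cart_Rep_basis_index vec_eq_iff)

lemma linear_to_cart: "linear to_cart"
  by (rule linearI) (simp_all add: to_cart_def vec_eq_iff inner_add_left)

lemma linear_of_cart: "linear of_cart"
  by (rule linearI) (simp_all add: of_cart_def sum.distrib scaleR_add_left scaleR_sum_right)

lemma inner_to_cart: "to_cart x \<bullet> to_cart y = x \<bullet> y"
proof -
  have "to_cart x \<bullet> to_cart y = (\<Sum>i\<in>UNIV. (x \<bullet> Rep_basis_index i) * (y \<bullet> Rep_basis_index i))"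
    by (simp add: inner_vec_def to_cart_def)
  also have "\<dots> = (\<Sum>b\<in>Basis. (x \<bullet> b) * (y \<bullet> b))"
    by (rule sum_basis_index)
  also have "\<dots> = x \<bullet> y"
    by (rule euclidean_inner[symmetric])
  finally show ?thesis .
qed

lemma norm_to_cart: "norm (to_cart x) = norm x"
  by (simp add: norm_eq_sqrt_inner inner_to_cart)

lemma norm_of_cart: "norm (of_cart v) = norm v"
  by (metis norm_to_cart to_cart_of_cart)

lemma borel_measurable_linear:
  fixes f :: "'a::euclidean_space \<Rightarrow> 'b::euclidean_space"
  assumes "linear f"
  shows "f \<in> borel_measurable borel"
  using assms by (intro borel_measurable_continuous_onI linear_continuous_on linear_conv_bounded_linear[THEN iffD1])

lemma borel_measurable_to_cart [measurable]: "to_cart \<in> borel_measurable borel"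
  by (simp add: borel_measurable_linear linear_to_cart)

lemma borel_measurable_of_cart [measurable]: "of_cart \<in> borel_measurable borel"
  by (simp add: borel_measurable_linear linear_of_cart)

lemma lborel_distr_to_cart: "distr lborel borel to_cart = (lborel :: (real^'a::euclidean_space basis_index) measure)"
proof (rule lborel_eqI[symmetric])
  fix l u :: "real^'a basis_index"
  assume le_Basis: "\<And>b. b \<in> Basis \<Longrightarrow> l \<bullet> b \<le> u \<bullet> b"
  have le: "l $ i \<le> u $ i" for i
    using le_Basis[of "axis i 1"] by (force simp: Basis_vec_def cart_eq_inner_axis)
  have "y \<in> box (of_cart l) (of_cart u) \<longleftrightarrow>
      (\<forall>i. l $ i < y \<bullet> Rep_basis_index i \<and> y \<bullet> Rep_basis_index i < u $ i)" for y :: 'a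
    unfolding mem_box by (simp add: inner_of_cart_Rep_basis_index flip: range_Rep_basis_index)
  then have "to_cart -` box l u = box (of_cart l) (of_cart u :: 'a)"
    by (auto simp: mem_box_cart to_cart_def)
  then have "emeasure (distr lborel borel to_cart) (box l u) = emeasure lborel (box (of_cart l) (of_cart u :: 'a))"
    by (simp add: emeasure_distr)
  also have "\<dots> = (\<Prod>b\<in>(Basis::'a set). (of_cart u - of_cart l) \<bullet> b)"
    by (rule emeasure_lborel_box)
      (auto simp: le inner_of_cart_Rep_basis_index simp flip: range_Rep_basis_index)
  also have "\<dots> = (\<Prod>i\<in>UNIV. u $ i - l $ i)"
    by (simp add: prod_basis_index[symmetric] inner_diff_left inner_of_cart_Rep_basis_index)
  also have "\<dots> = (\<Prod>b\<in>Basis. (u - l) \<bullet> b)"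
    using content_cbox_cart[of l u] content_cbox_if[of l u] le le_Basis
    by (simp add: inner_diff_left box_ne_empty)
  finally show "emeasure (distr lborel borel to_cart) (box l u) = (\<Prod>b\<in>Basis. (u - l) \<bullet> b)" .
qed simp

lemma lborel_distr_of_cart: "distr lborel borel of_cart = (lborel :: 'a::euclidean_space measure)"
proof -
  have "distr lborel borel of_cart = distr (distr (lborel :: 'a measure) borel to_cart) borel of_cart"
    by (simp add: lborel_distr_to_cart)
  also have "\<dots> = distr (lborel :: 'a measure) borel (of_cart \<circ> to_cart)"
    by (rule distr_distr) simp_all
  also have "\<dots> = distr (lborel :: 'a measure) lborel (\<lambda>x. x)"
    by (rule distr_cong) auto
  finally show ?thesis by simp
qed

lemma lborel_distr_orthogonal_transformation_cart:
  fixes Q :: "real^'n::{finite,wellorder} \<Rightarrow> real^'n::_"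
  assumes Q: "orthogonal_transformation Q"
  shows "distr lborel borel Q = lborel"
proof (rule lborel_eqI[symmetric])
  fix l u :: "real^'n::{finite,wellorder}"
  assume le: "\<And>b. b \<in> Basis \<Longrightarrow> l \<bullet> b \<le> u \<bullet> b"
  have Q_borel: "Q \<in> borel_measurable borel"
    using Q by (simp add: borel_measurable_linear orthogonal_transformation_linear)
  have "Q -` box l u = inv Q ` box l u"
    using Q by (simp add: bij_vimage_eq_inv_image orthogonal_transformation_bij)
  moreover have "inv Q ` box l u \<in> lmeasurable"
    by (rule measurable_orthogonal_image[OF orthogonal_transformation_inv[OF Q]]) simp
  moreover have "measure lebesgue (inv Q ` box l u) = measure lebesgue (box l u)"
    by (rule measure_orthogonal_image[OF orthogonal_transformation_inv[OF Q]]) simp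
  ultimately have "emeasure lebesgue (Q -` box l u) = emeasure lebesgue (box l u)"
    by (simp add: emeasure_eq_measure2)
  moreover have "Q -` box l u \<in> sets borel"
    using Q_borel by (simp add: measurable_sets_borel)
  ultimately have "emeasure (distr lborel borel Q) (box l u) = emeasure lborel (box l u)"
    using Q_borel by (simp add: emeasure_distr)
  then show "emeasure (distr lborel borel Q) (box l u) = (\<Prod>b\<in>Basis. (u - l) \<bullet> b)"
    using le by simp
qed simp

lemma orthogonal_transformation_to_cart_conj:
  "orthogonal_transformation T \<Longrightarrow> orthogonal_transformation (to_cart \<circ> T \<circ> of_cart)"
  by (auto simp: orthogonal_transformation norm_to_cart norm_of_cart
      intro!: linear_compose linear_to_cart linear_of_cart)

lemma orthogonal_transformation_of_cart_conj:
  "orthogonal_transformation Q \<Longrightarrow> orthogonal_transformation (of_cart \<circ> Q \<circ> to_cart)"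
  by (auto simp: orthogonal_transformation norm_to_cart norm_of_cart
      intro!: linear_compose linear_to_cart linear_of_cart)

lemma lborel_distr_orthogonal_transformation:
  fixes T :: "'a::euclidean_space \<Rightarrow> 'a"
  assumes T: "orthogonal_transformation T"
  shows "distr lborel borel T = lborel"
proof -
  define Q where "Q = to_cart \<circ> T \<circ> of_cart"
  have Q: "orthogonal_transformation Q"
    unfolding Q_def using T by (rule orthogonal_transformation_to_cart_conj)
  then have [measurable]: "Q \<in> borel_measurable borel"
    by (simp add: borel_measurable_linear orthogonal_transformation_linear)
  have "T = of_cart \<circ> Q \<circ> to_cart"
    by (simp add: Q_def fun_eq_iff)
  then have "distr lborel borel T = distr (distr (distr lborel borel to_cart) borel Q) borel of_cart"
    by (simp add: distr_distr comp_assoc)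
  also have "\<dots> = lborel"
    using Q by (simp add: lborel_distr_to_cart lborel_distr_orthogonal_transformation_cart lborel_distr_of_cart)
  finally show ?thesis .
qed

lemma orthogonal_transformation_exists_euclidean:
  fixes a b :: "'a::euclidean_space"
  assumes "norm a = norm b"
  obtains T where "orthogonal_transformation T" "T a = b"
proof -
  obtain Q where Q: "orthogonal_transformation Q" "Q (to_cart a) = to_cart b"
    using orthogonal_transformation_exists[of "to_cart a" "to_cart b"] assms by (auto simp: norm_to_cart)
  show ?thesis
    using orthogonal_transformation_of_cart_conj[OF Q(1)] by (rule that) (simp add: Q(2))
qed

lemma
  fixes T :: "'a::euclidean_space \<Rightarrow> 'a"
  assumes T: "orthogonal_transformation T"
  shows lebesgue_distr_orthogonal_transformation: "distr lebesgue lebesgue T = lebesgue"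
    and measurable_lebesgue_orthogonal_transformation: "T \<in> lebesgue \<rightarrow>\<^sub>M lebesgue"
proof -
  have T_borel: "T \<in> borel_measurable borel"
    using T by (simp add: borel_measurable_linear orthogonal_transformation_linear)
  then have T_lebesgue: "T \<in> lebesgue \<rightarrow>\<^sub>M lborel"
    by (simp add: measurable_completion)
  have "distr lebesgue lborel T = distr lborel lborel T"
    by (rule distr_completion) (simp add: T_borel)
  also have "\<dots> = distr lborel borel T"
    by (rule distr_cong) auto
  finally have distr_lborel: "distr lebesgue lborel T = lborel"
    using T by (simp add: lborel_distr_orthogonal_transformation)
  have "completion (distr lebesgue lborel T) = distr lebesgue (completion lborel) T"
    by (rule completion.completion_distr_eq[OF T_lebesgue]) (simp add: distr_lborel)
  then show "distr lebesgue lebesgue T = lebesgue"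
    by (simp add: distr_lborel)
  show "T \<in> lebesgue \<rightarrow>\<^sub>M lebesgue"
    by (rule completion.measurable_completion2[OF T_lebesgue]) (simp add: distr_lborel)
qed

lemma nn_integral_lebesgue_orthogonal_transformation:
  fixes T :: "'a::euclidean_space \<Rightarrow> 'a"
  assumes T: "orthogonal_transformation T" and g: "g \<in> borel_measurable lebesgue"
  shows "(\<integral>\<^sup>+y. g (T y) \<partial>lebesgue) = (\<integral>\<^sup>+y. g y \<partial>lebesgue)"
  using nn_integral_distr[OF measurable_lebesgue_orthogonal_transformation[OF T], of g] g
  by (simp add: lebesgue_distr_orthogonal_transformation[OF T])

section \<open>Radial functions and separated points on a sphere\<close>

lemma nn_integral_radial_ball_eq:
  fixes g :: "'a::euclidean_space \<Rightarrow> ennreal"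
  assumes rad: "radially_symmetric g" and g: "g \<in> borel_measurable lebesgue"
    and norm_eq: "norm s = norm x"
  shows "(\<integral>\<^sup>+y. g y * indicator (ball s R) y \<partial>lebesgue) = (\<integral>\<^sup>+y. g y * indicator (ball x R) y \<partial>lebesgue)"
proof -
  obtain g0 where g0: "\<And>y. g y = g0 (norm y)"
    using rad unfolding radially_symmetric_def by blast
  obtain T where T: "orthogonal_transformation T" and Tx: "T x = s"
    using orthogonal_transformation_exists_euclidean[of x s] norm_eq by metis
  have "(\<integral>\<^sup>+y. g y * indicator (ball s R) y \<partial>lebesgue)
      = (\<integral>\<^sup>+z. g (T z) * indicator (ball s R) (T z) \<partial>lebesgue)"
    using g by (intro nn_integral_lebesgue_orthogonal_transformation[OF T, symmetric]
        borel_measurable_times_ennreal borel_measurable_indicator) auto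
  also have "\<dots> = (\<integral>\<^sup>+z. g z * indicator (ball x R) z \<partial>lebesgue)"
  proof (intro nn_integral_cong)
    fix z
    have "dist s (T z) = norm (T (x - z))"
      using Tx by (simp add: dist_norm linear_diff[OF orthogonal_transformation_linear[OF T]])
    also have "\<dots> = dist x z"
      using T by (simp add: orthogonal_transformation dist_norm)
    finally have "dist s (T z) = dist x z" .
    moreover have "norm (T z) = norm z"
      using T by (simp add: orthogonal_transformation)
    ultimately show "g (T z) * indicator (ball s R) (T z) = g z * indicator (ball x R) z"
      by (simp add: g0 indicator_def)
  qed
  finally show ?thesis .
qed

definition dist_separated :: "real \<Rightarrow> 'a::metric_space set \<Rightarrow> bool"
  where "dist_separated d S \<longleftrightarrow> (\<forall>a\<in>S. \<forall>b\<in>S. a \<noteq> b \<longrightarrow> d \<le> dist a b)"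

lemma sum_indicator_ball_le_1:
  assumes "finite S" "dist_separated (2 * R) S"
  shows "(\<Sum>s\<in>S. indicator (ball s R) y :: ennreal) \<le> 1"
proof -
  have "card (S \<inter> ball y R) \<le> Suc 0"
  proof (subst card_le_Suc0_iff_eq)
    show "finite (S \<inter> ball y R)"
      using assms(1) by simp
    show "\<forall>a\<in>S \<inter> ball y R. \<forall>b\<in>S \<inter> ball y R. a = b"
    proof (intro ballI, rule ccontr)
      fix a b assume a: "a \<in> S \<inter> ball y R" and b: "b \<in> S \<inter> ball y R" and "a \<noteq> b"
      then have "2 * R \<le> dist a b"
        using assms(2) by (auto simp: dist_separated_def)
      moreover have "dist a b < 2 * R"
        using a b dist_triangle_less_add[of a y R b R] by (auto simp: dist_commute)
      ultimately show False by simp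
    qed
  qed
  have "(\<Sum>s\<in>S. indicator (ball s R) y :: ennreal) = (\<Sum>s\<in>S. indicator (ball y R) s)"
    by (intro sum.cong refl) (simp add: indicator_def dist_commute)
  also have "\<dots> = of_nat (card (S \<inter> ball y R))"
    by (subst sum_indicator_eq_card[OF assms(1), symmetric]) (simp add: of_nat_sum indicator_def)
  also have "\<dots> \<le> 1"
    using \<open>card (S \<inter> ball y R) \<le> Suc 0\<close> by (metis One_nat_def of_nat_1 of_nat_le_iff)
  finally show ?thesis .
qed

lemma card_mult_nn_integral_ball_le:
  fixes g :: "'a::euclidean_space \<Rightarrow> ennreal" and S :: "'a set"
  assumes rad: "radially_symmetric g" and g: "g \<in> borel_measurable lebesgue"
    and S: "finite S" "S \<subseteq> sphere 0 (norm x)" "dist_separated (2 * R) S"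
  shows "of_nat (card S) * (\<integral>\<^sup>+y. g y * indicator (ball x R) y \<partial>lebesgue) \<le> (\<integral>\<^sup>+y. g y \<partial>lebesgue)"
proof -
  have "(\<Sum>s\<in>S. \<integral>\<^sup>+y. g y * indicator (ball s R) y \<partial>lebesgue)
      = (\<Sum>s\<in>S. \<integral>\<^sup>+y. g y * indicator (ball x R) y \<partial>lebesgue)"
    using S(2) by (intro sum.cong refl nn_integral_radial_ball_eq[OF rad g]) auto
  then have "of_nat (card S) * (\<integral>\<^sup>+y. g y * indicator (ball x R) y \<partial>lebesgue)
      = (\<Sum>s\<in>S. \<integral>\<^sup>+y. g y * indicator (ball s R) y \<partial>lebesgue)"
    by simp
  also have "\<dots> = (\<integral>\<^sup>+y. (\<Sum>s\<in>S. g y * indicator (ball s R) y) \<partial>lebesgue)"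
    using g by (intro nn_integral_sum[symmetric] borel_measurable_times_ennreal
        borel_measurable_indicator) auto
  also have "\<dots> \<le> (\<integral>\<^sup>+y. g y \<partial>lebesgue)"
  proof (intro nn_integral_mono)
    fix y
    have "(\<Sum>s\<in>S. g y * indicator (ball s R) y) = g y * (\<Sum>s\<in>S. indicator (ball s R) y)"
      by (rule sum_distrib_left[symmetric])
    also have "\<dots> \<le> g y * 1"
      using sum_indicator_ball_le_1[OF S(1,3)] by (rule mult_left_mono) simp
    finally show "(\<Sum>s\<in>S. g y * indicator (ball s R) y) \<le> g y"
      by simp
  qed
  finally show ?thesis .
qed

lemma emeasure_lborel_ball:
  fixes c :: "'a::euclidean_space"
  assumes "r \<ge> 0"
  shows "emeasure lborel (ball c r) = ennreal (r ^ DIM('a) * measure lborel (ball (0::'a) 1))"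
  using emeasure_lborel_ball_finite[of c r] content_ball_conv_unit_ball[OF assms, of c]
  by (simp add: emeasure_eq_ennreal_measure)

lemma card_dist_separated_sphere_le:
  fixes x :: "'a::euclidean_space" and S :: "'a set"
  assumes S: "finite S" "S \<subseteq> sphere 0 (norm x)" "dist_separated (2 * R) S" and R: "R > 0"
  shows "real (card S) * R ^ DIM('a) \<le> (norm x + R) ^ DIM('a)"
proof -
  define \<rho> where "\<rho> = norm x + R"
  define \<omega> where "\<omega> = measure lborel (ball (0::'a) 1)"
  have \<omega>: "\<omega> > 0"
    by (simp add: \<omega>_def content_ball_pos)
  have "radially_symmetric (indicator (ball (0::'a) \<rho>) :: 'a \<Rightarrow> ennreal)"
    unfolding radially_symmetric_def by (auto intro!: exI[of _ "indicator {..<\<rho>}"] simp: indicator_def)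
  then have "of_nat (card S) * (\<integral>\<^sup>+y. indicator (ball 0 \<rho>) y * indicator (ball x R) y \<partial>lebesgue)
      \<le> (\<integral>\<^sup>+y. indicator (ball (0::'a) \<rho>) y \<partial>lebesgue)"
    using S by (intro card_mult_nn_integral_ball_le borel_measurable_indicator) auto
  moreover have "ball x R \<subseteq> ball 0 \<rho>"
  proof
    fix y assume "y \<in> ball x R"
    then have "norm (y - x) < R"
      by (simp add: dist_norm norm_minus_commute)
    moreover have "norm y \<le> norm x + norm (y - x)"
      using norm_triangle_ineq[of x "y - x"] by simp
    ultimately show "y \<in> ball 0 \<rho>"
      by (simp add: \<rho>_def)
  qed
  then have "(\<lambda>y. indicator (ball 0 \<rho>) y * indicator (ball x R) y :: ennreal) = indicator (ball x R)"
    by (auto simp: indicator_def fun_eq_iff)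
  ultimately have "ennreal (real (card S) * (R ^ DIM('a) * \<omega>)) \<le> ennreal (\<rho> ^ DIM('a) * \<omega>)"
    using R by (simp add: emeasure_lborel_ball \<omega>_def \<rho>_def ennreal_mult' ennreal_of_nat_eq_real_of_nat)
  then have "real (card S) * R ^ DIM('a) * \<omega> \<le> \<rho> ^ DIM('a) * \<omega>"
    using R \<omega> by (subst (asm) ennreal_le_iff) (auto simp: \<rho>_def mult.assoc)
  then show ?thesis
    using \<omega> by (simp add: \<rho>_def)
qed

lemma maximal_dist_separated_subset_sphere:
  fixes x :: "'a::euclidean_space"
  assumes R: "R > 0"
  obtains S :: "'a set" where "finite S" "S \<subseteq> sphere 0 (norm x)" "dist_separated (2 * R) S"
    "\<And>y. y \<in> sphere 0 (norm x) \<Longrightarrow> \<exists>s\<in>S. dist y s < 2 * R"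
proof -
  define P where "P S \<longleftrightarrow> finite S \<and> S \<subseteq> sphere (0::'a) (norm x) \<and> dist_separated (2 * R) S" for S
  define B :: nat where "B = nat \<lceil>(norm x + R) ^ DIM('a) / R ^ DIM('a)\<rceil>"
  have bound: "card S \<le> B" if "P S" for S
  proof -
    have "real (card S) * R ^ DIM('a) \<le> (norm x + R) ^ DIM('a)"
      using card_dist_separated_sphere_le[of S x R] that R unfolding P_def by blast
    then have "real (card S) \<le> (norm x + R) ^ DIM('a) / R ^ DIM('a)"
      using R by (simp add: pos_le_divide_eq)
    then show ?thesis
      unfolding B_def by linarith
  qed
  moreover have "P {}"
    by (simp add: P_def dist_separated_def)
  ultimately obtain S where S: "P S" and S_max: "\<And>S'. P S' \<Longrightarrow> card S' \<le> card S"
    using Lattices_Big.ex_has_greatest_nat[of P "{}" card "Suc B"] by (metis less_Suc_eq_le)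
  have cover: "\<exists>s\<in>S. dist y s < 2 * R" if y: "y \<in> sphere 0 (norm x)" for y
  proof (rule ccontr)
    assume "\<not> ?thesis"
    then have far: "\<forall>s\<in>S. 2 * R \<le> dist y s"
      by (simp add: not_less)
    then have "y \<notin> S"
      using R by auto
    moreover have "P (insert y S)"
      using S far y unfolding P_def dist_separated_def by (metis dist_commute finite_insert insert_iff insert_subset)
    ultimately have "card S < card (insert y S)"
      using S by (simp add: P_def)
    then show False
      using S_max[OF \<open>P (insert y S)\<close>] by simp
  qed
  from S show ?thesis
    unfolding P_def by (intro that) (auto simp: cover)
qed

lemma shell_subset_UN_ball:
  fixes S :: "'a::euclidean_space set"
  assumes r: "r \<ge> 0" and cover: "\<And>y. y \<in> sphere 0 r \<Longrightarrow> \<exists>s\<in>S. dist y s < 2 * R"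
  shows "ball 0 (r + R) - cball 0 r \<subseteq> (\<Union>s\<in>S. ball s (3 * R))"
proof
  fix y :: 'a assume "y \<in> ball 0 (r + R) - cball 0 r"
  then have y: "norm y < r + R" "r < norm y"
    by auto
  then have "y \<noteq> 0" "r / norm y \<le> 1"
    using r by (auto simp: divide_le_eq_1)
  define y' where "y' = (r / norm y) *\<^sub>R y"
  have "norm y' = r"
    using r \<open>y \<noteq> 0\<close> by (simp add: y'_def)
  then obtain s where s: "s \<in> S" "dist y' s < 2 * R"
    using cover by auto
  have "dist y y' = norm ((1 - r / norm y) *\<^sub>R y)"
    unfolding dist_norm y'_def by (simp only: scaleR_diff_left scaleR_one)
  also have "\<dots> = (1 - r / norm y) * norm y"
    using \<open>r / norm y \<le> 1\<close> by (simp only: norm_scaleR real_norm_def abs_of_nonneg diff_ge_0_iff_ge)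
  also have "\<dots> = norm y - r"
    using \<open>y \<noteq> 0\<close> by (simp add: field_simps)
  finally have "dist y s < 3 * R"
    using dist_triangle[of y s y'] s y by linarith
  with s show "y \<in> (\<Union>s\<in>S. ball s (3 * R))"
    by (auto simp: dist_commute)
qed

lemma mult_power_le_diff_power:
  fixes r R :: real
  assumes "r \<ge> 0" "R \<ge> 0"
  shows "R * r ^ k \<le> (r + R) ^ Suc k - r ^ Suc k"
proof -
  have "(r + R) * r ^ k \<le> (r + R) * (r + R) ^ k"
    using assms by (intro mult_left_mono power_mono) auto
  then show ?thesis
    by (simp add: algebra_simps)
qed

lemma card_covering_sphere_ge:
  fixes S :: "'a::euclidean_space set"
  assumes S: "finite S" and R: "R > 0" and r: "r \<ge> 0"
    and cover: "\<And>y. y \<in> sphere 0 r \<Longrightarrow> \<exists>s\<in>S. dist y s < 2 * R"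
  shows "r ^ (DIM('a) - 1) \<le> 3 ^ DIM('a) * R ^ (DIM('a) - 1) * real (card S)"
proof -
  define n where "n = DIM('a)"
  define \<omega> where "\<omega> = measure lborel (ball (0::'a) 1)"
  have \<omega>: "\<omega> > 0"
    by (simp add: \<omega>_def content_ball_pos)
  have vol: "measure lborel (ball c t) = t ^ n * \<omega>" if "t \<ge> 0" for c :: 'a and t
    using content_ball_conv_unit_ball[OF that, of c] by (simp add: \<omega>_def n_def)
  have "measure lebesgue (ball (0::'a) (r + R) - cball 0 r)
      = measure lebesgue (ball (0::'a) (r + R)) - measure lebesgue (cball (0::'a) r)"
    using R emeasure_lborel_ball_finite[of "0::'a" "r + R"] by (intro measure_Diff) auto
  also have "\<dots> = ((r + R) ^ n - r ^ n) * \<omega>"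
    using r R by (simp add: vol content_cball_conv_ball left_diff_distrib)
  finally have "((r + R) ^ n - r ^ n) * \<omega> = measure lebesgue (ball (0::'a) (r + R) - cball 0 r)" ..
  also have "\<dots> \<le> measure lebesgue (\<Union>s\<in>S. ball s (3 * R))"
    using S shell_subset_UN_ball[OF r cover]
    by (intro measure_mono_fmeasurable) (auto intro: lmeasurable_open bounded_UN)
  also have "\<dots> \<le> (\<Sum>s\<in>S. measure lebesgue (ball s (3 * R)))"
    using S by (intro measure_UNION_le) auto
  also have "\<dots> = (real (card S) * (3 * R) ^ n) * \<omega>"
    using R by (simp add: vol)
  finally have shell: "(r + R) ^ n - r ^ n \<le> real (card S) * (3 * R) ^ n"
    using \<omega> by simp
  obtain k where k: "n = Suc k"
    using DIM_positive not0_implies_Suc unfolding n_def by blast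
  have "R * r ^ k \<le> (r + R) ^ n - r ^ n"
    using mult_power_le_diff_power[OF r, of R k] R k by simp
  also have "\<dots> \<le> real (card S) * (3 * R) ^ n"
    by (rule shell)
  also have "\<dots> = R * (3 ^ n * R ^ k * real (card S))"
    unfolding k by (simp add: power_mult_distrib algebra_simps)
  finally show ?thesis
    using R k by (simp add: n_def)
qed

lemma nn_integral_radial_ball_le:
  fixes g :: "'a::euclidean_space \<Rightarrow> ennreal" and x :: 'a
  assumes rad: "radially_symmetric g" and g: "g \<in> borel_measurable lebesgue"
    and R: "R > 0" and x: "x \<noteq> 0"
  shows "(\<integral>\<^sup>+y. g y * indicator (ball x R) y \<partial>lebesgue)
    \<le> ennreal (3 ^ DIM('a) * (R / norm x) ^ (DIM('a) - 1)) * (\<integral>\<^sup>+y. g y \<partial>lebesgue)"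
proof -
  define c where "c = 3 ^ DIM('a) * (R / norm x) ^ (DIM('a) - 1)"
  obtain S :: "'a set" where S: "finite S" "S \<subseteq> sphere 0 (norm x)" "dist_separated (2 * R) S"
    and cover: "\<And>y. y \<in> sphere 0 (norm x) \<Longrightarrow> \<exists>s\<in>S. dist y s < 2 * R"
    using maximal_dist_separated_subset_sphere[OF R, where x = x] by blast
  have "norm x ^ (DIM('a) - 1) \<le> 3 ^ DIM('a) * R ^ (DIM('a) - 1) * real (card S)"
    using card_covering_sphere_ge[OF S(1) R _ cover] by simp
  then have "1 \<le> c * real (card S)"
    using x by (simp add: c_def power_divide field_simps)
  then have "(\<integral>\<^sup>+y. g y * indicator (ball x R) y \<partial>lebesgue)
      \<le> ennreal (c * real (card S)) * (\<integral>\<^sup>+y. g y * indicator (ball x R) y \<partial>lebesgue)"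
    using mult_right_mono[of 1 "ennreal (c * real (card S))"] by simp
  also have "\<dots> = ennreal c * (of_nat (card S) * (\<integral>\<^sup>+y. g y * indicator (ball x R) y \<partial>lebesgue))"
    using R by (simp add: c_def ennreal_mult' ennreal_of_nat_eq_real_of_nat mult.assoc)
  also have "\<dots> \<le> ennreal c * (\<integral>\<^sup>+y. g y \<partial>lebesgue)"
    by (intro mult_left_mono card_mult_nn_integral_ball_le[OF rad g S]) simp
  finally show ?thesis
    by (simp add: c_def)
qed

section \<open>Hoelder's inequality on a set\<close>

text \<open>Young's inequality applied to a / B^(1/p) and 1 / V^(1 - 1/p).\<close>

lemma le_Young_powr:
  fixes a B V p :: real
  assumes p: "p > 1" and a: "a \<ge> 0" and B: "B > 0" and V: "V > 0"
  shows "a \<le> B powr (1/p) * V powr (1 - 1/p) * (a powr p / (p * B) + (1 - 1/p) / V)"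
proof -
  define q where "q = p / (p - 1)"
  have q: "q > 1" "1/p + 1/q = 1"
    using p by (auto simp: q_def field_simps)
  define P where "P = B powr (1/p)"
  define \<beta> where "\<beta> = V powr (1 - 1/p)"
  have P\<beta>: "P > 0" "\<beta> > 0"
    using B V by (auto simp: P_def \<beta>_def)
  have "(a / P) * (1 / \<beta>) \<le> (a / P) powr p / p + (1 / \<beta>) powr q / q"
    using Youngs_inequality[OF p q, of "a / P" "1 / \<beta>"] a P\<beta> by simp
  also have "(a / P) powr p = a powr p / B"
    using a B p by (simp add: P_def powr_divide powr_powr)
  also have "(1 / \<beta>) powr q = 1 / V"
    using V p by (simp add: \<beta>_def q_def powr_divide powr_powr field_simps)
  also have "1 / V / q = (1 - 1/p) / V"
    using p by (simp add: q_def field_simps)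
  finally have "a / (P * \<beta>) \<le> a powr p / (p * B) + (1 - 1/p) / V"
    by (simp add: mult.commute)
  then show ?thesis
    using P\<beta> by (simp add: P_def \<beta>_def divide_le_eq mult.commute)
qed

lemma nn_integral_indicator_eq_0_if_powr:
  fixes f :: "'a \<Rightarrow> real"
  assumes p: "p > 0" and f: "f \<in> borel_measurable M" and A: "A \<in> sets M"
    and zero: "(\<integral>\<^sup>+y. ennreal (\<bar>f y\<bar> powr p) * indicator A y \<partial>M) = 0"
  shows "(\<integral>\<^sup>+y. ennreal \<bar>f y\<bar> * indicator A y \<partial>M) = 0"
proof -
  have "AE y in M. ennreal (\<bar>f y\<bar> powr p) * indicator A y = 0"
    using zero f A by (subst (asm) nn_integral_0_iff_AE) auto
  then have "AE y in M. ennreal \<bar>f y\<bar> * indicator A y = 0"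
    by eventually_elim (simp add: indicator_def split: if_splits)
  then show ?thesis
    using f A by (subst nn_integral_0_iff_AE) auto
qed

lemma nn_integral_Holder_indicator:
  fixes f :: "'a \<Rightarrow> real"
  assumes p: "p > 1" and f: "f \<in> borel_measurable M" and A: "A \<in> sets M"
    and V: "emeasure M A = ennreal V" "V > 0"
    and B: "(\<integral>\<^sup>+y. ennreal (\<bar>f y\<bar> powr p) * indicator A y \<partial>M) \<le> ennreal B" "B \<ge> 0"
  shows "(\<integral>\<^sup>+y. ennreal \<bar>f y\<bar> * indicator A y \<partial>M) \<le> ennreal (B powr (1/p) * V powr (1 - 1/p))"
proof (cases "B = 0")
  case True
  with B have "(\<integral>\<^sup>+y. ennreal (\<bar>f y\<bar> powr p) * indicator A y \<partial>M) = 0"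
    by simp
  with p f A have "(\<integral>\<^sup>+y. ennreal \<bar>f y\<bar> * indicator A y \<partial>M) = 0"
    by (intro nn_integral_indicator_eq_0_if_powr) auto
  then show ?thesis
    by simp
next
  case False
  with B have B_pos: "B > 0"
    by simp
  define c where "c = B powr (1/p) * V powr (1 - 1/p)"
  have c: "c \<ge> 0"
    by (simp add: c_def)
  have "(\<integral>\<^sup>+y. ennreal \<bar>f y\<bar> * indicator A y \<partial>M)
      \<le> (\<integral>\<^sup>+y. ennreal (c / (p * B)) * (ennreal (\<bar>f y\<bar> powr p) * indicator A y)
               + ennreal (c * (1 - 1/p) / V) * indicator A y \<partial>M)"
  proof (intro nn_integral_mono)
    fix y
    have "\<bar>f y\<bar> \<le> c / (p * B) * \<bar>f y\<bar> powr p + c * (1 - 1/p) / V"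
      using le_Young_powr[OF p _ B_pos V(2), of "\<bar>f y\<bar>"] by (simp add: c_def algebra_simps)
    then show "ennreal \<bar>f y\<bar> * indicator A y
        \<le> ennreal (c / (p * B)) * (ennreal (\<bar>f y\<bar> powr p) * indicator A y)
          + ennreal (c * (1 - 1/p) / V) * indicator A y"
      using p B_pos V c
      by (auto simp: indicator_def ennreal_mult'[symmetric] simp flip: ennreal_plus)
  qed
  also have "\<dots> = ennreal (c / (p * B)) * (\<integral>\<^sup>+y. ennreal (\<bar>f y\<bar> powr p) * indicator A y \<partial>M)
      + ennreal (c * (1 - 1/p) / V) * emeasure M A"
    using f A by (simp add: nn_integral_add nn_integral_cmult)
  also have "\<dots> \<le> ennreal (c / (p * B)) * ennreal B + ennreal (c * (1 - 1/p) / V) * ennreal V"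
    using B V by (intro add_mono mult_left_mono) auto
  also have "\<dots> = ennreal (c / (p * B) * B + c * (1 - 1/p) / V * V)"
    using p B_pos V c by (simp add: ennreal_mult'[symmetric] flip: ennreal_plus)
  also have "c / (p * B) * B + c * (1 - 1/p) / V * V = c"
    using p B_pos V by (simp add: field_simps)
  finally show ?thesis
    by (simp add: c_def)
qed

section \<open>The convolution estimate\<close>

lemma abs_conv_indicator_ball_le:
  fixes f :: "'a::euclidean_space \<Rightarrow> real"
  assumes f: "f \<in> borel_measurable lebesgue"
  shows "\<bar>conv f (indicator (ball 0 R)) x\<bar>
    \<le> enn2real (\<integral>\<^sup>+y. ennreal \<bar>f y\<bar> * indicator (ball x R) y \<partial>lebesgue)"
proof -
  have shift: "indicator (ball 0 R) (x - y) = indicator (ball x R) y" for y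
    by (simp add: indicator_def dist_norm norm_minus_commute)
  have "\<bar>conv f (indicator (ball 0 R)) x\<bar> = norm (LINT y|lebesgue. f y * indicator (ball x R) y)"
    unfolding conv_def shift by simp
  also have "\<dots> \<le> (LINT y|lebesgue. \<bar>f y\<bar> * indicator (ball x R) y)"
    using integral_norm_bound[of lebesgue "\<lambda>y. f y * indicator (ball x R) y"] by (simp add: abs_mult)
  also have "\<dots> = enn2real (\<integral>\<^sup>+y. ennreal \<bar>f y\<bar> * indicator (ball x R) y \<partial>lebesgue)"
    using f by (subst integral_eq_nn_integral)
      (auto simp: ennreal_mult' ennreal_indicator
        intro!: borel_measurable_times borel_measurable_abs borel_measurable_indicator)
  finally show ?thesis .
qed

lemma Holder_ball_bound_eq:
  fixes R r N \<omega> p :: real and n :: nat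
  assumes "R > 0" "r > 0" "N \<ge> 0" "\<omega> > 0" "p > 0" "n \<ge> 1"
  shows "(3 ^ n * (R / r) ^ (n - 1) * N) powr (1/p) * (R ^ n * \<omega>) powr (1 - 1/p)
    = (3 ^ n) powr (1/p) * \<omega> powr (1 - 1/p) * R powr (real n - 1/p) * r powr (- (real n - 1) / p)
      * N powr (1/p)"
proof -
  have "real (n - 1) = real n - 1"
    using assms by (simp add: of_nat_diff)
  then have "(R / r) ^ (n - 1) = (R / r) powr (real n - 1)"
    using assms by (metis divide_pos_pos powr_realpow)
  then have "((R / r) ^ (n - 1)) powr (1/p) = (R / r) powr ((real n - 1) / p)"
    by (simp add: powr_powr)
  also have "\<dots> = R powr ((real n - 1) / p) / r powr ((real n - 1) / p)"
    by (rule powr_divide)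
  also have "\<dots> = R powr ((real n - 1) / p) * r powr (- (real n - 1) / p)"
    unfolding minus_divide_left[symmetric] powr_minus by (rule divide_inverse)
  finally have Rr: "((R / r) ^ (n - 1)) powr (1/p) = R powr ((real n - 1) / p) * r powr (- (real n - 1) / p)" .
  have "R ^ n = R powr real n"
    using assms by (simp add: powr_realpow)
  then have Rn: "(R ^ n) powr (1 - 1/p) = R powr (real n * (1 - 1/p))"
    by (simp add: powr_powr)
  have "R powr ((real n - 1) / p) * R powr (real n * (1 - 1/p))
      = R powr ((real n - 1) / p + real n * (1 - 1/p))"
    by (rule powr_add[symmetric])
  also have "(real n - 1) / p + real n * (1 - 1/p) = real n - 1/p"
    using assms by (simp add: field_simps)
  finally have RR: "R powr ((real n - 1) / p) * R powr (real n * (1 - 1/p)) = R powr (real n - 1/p)" .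
  have "(3 ^ n * (R / r) ^ (n - 1) * N) powr (1/p) * (R ^ n * \<omega>) powr (1 - 1/p)
      = (3 ^ n) powr (1/p) * ((R / r) ^ (n - 1)) powr (1/p) * N powr (1/p)
        * ((R ^ n) powr (1 - 1/p) * \<omega> powr (1 - 1/p))"
    using assms by (simp add: powr_mult)
  also have "\<dots> = (3 ^ n) powr (1/p) * (R powr ((real n - 1) / p) * r powr (- (real n - 1) / p))
      * N powr (1/p) * (R powr (real n * (1 - 1/p)) * \<omega> powr (1 - 1/p))"
    by (simp only: Rr Rn)
  also have "\<dots> = (3 ^ n) powr (1/p) * \<omega> powr (1 - 1/p) * R powr (real n - 1/p)
      * r powr (- (real n - 1) / p) * N powr (1/p)"
    by (simp only: RR[symmetric] mult_ac)
  finally show ?thesis .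
qed

lemma radially_symmetric_comp:
  "radially_symmetric f \<Longrightarrow> radially_symmetric (\<lambda>x. h (f x))"
  unfolding radially_symmetric_def by (metis comp_apply)

lemma abs_conv_indicator_ball_le_radial:
  fixes f :: "'a::euclidean_space \<Rightarrow> real" and p R :: real
  assumes p: "1 < p" and rad: "radially_symmetric f" and f: "in_Lp p f" and R: "R > 0" and x: "x \<noteq> 0"
  shows "\<bar>conv f (indicator (ball 0 R)) x\<bar>
    \<le> (3 ^ DIM('a)) powr (1/p) * measure lborel (ball (0::'a) 1) powr (1 - 1/p)
      * R powr (real DIM('a) - 1/p) * norm x powr (- (real DIM('a) - 1) / p) * Lp_norm p f"
proof -
  define n where "n = DIM('a)"
  define \<omega> where "\<omega> = measure lborel (ball (0::'a) 1)"
  define N where "N = (LINT y|lebesgue. \<bar>f y\<bar> powr p)"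
  define B where "B = 3 ^ n * (R / norm x) ^ (n - 1) * N"
  define V where "V = R ^ n * \<omega>"
  have f_meas: "f \<in> borel_measurable lebesgue" and f_int: "integrable lebesgue (\<lambda>y. \<bar>f y\<bar> powr p)"
    using f by (auto simp: in_Lp_def)
  have \<omega>: "\<omega> > 0" and N: "N \<ge> 0"
    by (simp_all add: \<omega>_def N_def content_ball_pos)
  have "(\<integral>\<^sup>+y. ennreal (\<bar>f y\<bar> powr p) \<partial>lebesgue) = ennreal N"
    unfolding N_def using f_int by (rule nn_integral_eq_integral) simp
  moreover have "radially_symmetric (\<lambda>y. ennreal (\<bar>f y\<bar> powr p))"
    using rad by (rule radially_symmetric_comp)
  moreover have "(\<lambda>y. ennreal (\<bar>f y\<bar> powr p)) \<in> borel_measurable lebesgue"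
    using f_meas by measurable
  ultimately have "(\<integral>\<^sup>+y. ennreal (\<bar>f y\<bar> powr p) * indicator (ball x R) y \<partial>lebesgue) \<le> ennreal B"
    using nn_integral_radial_ball_le[of "\<lambda>y. ennreal (\<bar>f y\<bar> powr p)" R x] R x N
    by (simp add: B_def n_def ennreal_mult'[symmetric])
  moreover have "emeasure lebesgue (ball x R) = ennreal V"
    using R by (simp add: V_def \<omega>_def n_def emeasure_lborel_ball)
  ultimately have "(\<integral>\<^sup>+y. ennreal \<bar>f y\<bar> * indicator (ball x R) y \<partial>lebesgue)
      \<le> ennreal (B powr (1/p) * V powr (1 - 1/p))"
    using p f_meas R \<omega> N by (intro nn_integral_Holder_indicator) (auto simp: V_def B_def)
  then have "enn2real (\<integral>\<^sup>+y. ennreal \<bar>f y\<bar> * indicator (ball x R) y \<partial>lebesgue)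
      \<le> B powr (1/p) * V powr (1 - 1/p)"
    by (intro enn2real_leI) simp_all
  then have "\<bar>conv f (indicator (ball 0 R)) x\<bar> \<le> B powr (1/p) * V powr (1 - 1/p)"
    using abs_conv_indicator_ball_le[OF f_meas, of R x] by linarith
  also have "\<dots> = (3 ^ n) powr (1/p) * \<omega> powr (1 - 1/p) * R powr (real n - 1/p)
      * norm x powr (- (real n - 1) / p) * N powr (1/p)"
    unfolding B_def V_def using p R x \<omega> N by (intro Holder_ball_bound_eq) (auto simp: n_def)
  finally show ?thesis
    by (simp add: Lp_norm_def N_def n_def \<omega>_def)
qed

theorem mainTheorem2:
  fixes p :: real
  assumes "1 < p"
  shows "\<exists>C::real. \<forall>(f::'a::euclidean_space \<Rightarrow> real) R x.
           radially_symmetric f \<and> in_Lp p f \<and> R > 0 \<and> x \<noteq> 0 \<longrightarrow>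
           \<bar>conv f (indicator (ball 0 R)) x\<bar>
             \<le> C * R powr (real DIM('a) - 1 / p) * norm x powr (- (real DIM('a) - 1) / p)
                 * Lp_norm p f"
  using abs_conv_indicator_ball_le_radial[OF assms] by blast

end
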